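(* Let $\theta_\ast>0$ and $\sigma>0$. There exists a constant $C(\theta_\ast,\sigma^2)>0$ such that for every $1$-Lipschitz function $\ell:\mathbb R\to\mathbb R$ with $\ell(0)=0$ and every integer $k\ge1$, there exists a polynomial $P_{k-1}(\theta)=\sum_{x=0}^{k-1}c_x\theta^x$ whose coefficients satisfy $$|c_x|\le\frac{C(\theta_\ast,\sigma^2)(x+1)^{1/2}2^x\big(1+(x/(e\sigma^2))^{x/2}\big)}{x!},\qquad 0\le x\le k-1,$$ and such that $$\sup_{\theta\in[0,\theta_\ast]}\big|\ell_\sigma(\theta)-\ell_\sigma(0)-e^{-\theta}P_{k-1}(\theta)\big|\le\frac{C(\theta_\ast,\sigma^2)(k+1)^{1/2}(2\theta_\ast)^k\big(1+(k/(e\sigma^2))^{k/2}\big)}{k!}.$$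
   Context: $\varphi_\sigma$ is the density of $\mathcal N(0,\sigma^2)$ and $\ell_\sigma=\ell\ast\varphi_\sigma$, i.e. $\ell_\sigma(\theta)=\int_{\mathbb R}\ell(\theta-y)\varphi_\sigma(y)\,\mathrm dy$. The convention $0^0=1$ is used. *)

theory Defs
  imports "HOL-Analysis.Analysis"
begin

definition gauss_dens :: "real \<Rightarrow> real \<Rightarrow> real" where
  "gauss_dens \<sigma> y = exp (- (y\<^sup>2) / (2 * \<sigma>\<^sup>2)) / sqrt (2 * pi * \<sigma>\<^sup>2)"

definition smooth :: "(real \<Rightarrow> real) \<Rightarrow> real \<Rightarrow> real \<Rightarrow> real" where
  "smooth l \<sigma> \<theta> = (\<integral>y. l (\<theta> - y) * gauss_dens \<sigma> y \<partial>lborel)"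

definition pow00 :: "real \<Rightarrow> real \<Rightarrow> real" where
  "pow00 a b = (if a = 0 then (if b = 0 then 1 else 0) else a powr b)"

end

theory Submission
  imports Defs "HOL-Probability.Probability" "HOL-Real_Asymp.Real_Asymp"
begin

text \<open>
  Write \<phi> for the density of N(0, \<sigma>^2). Completing the square gives
  exp(\<theta>) \<phi>(\<theta> - u) = \<phi>(u) exp(-\<theta>^2/(2\<sigma>^2) + \<theta>(1 + u/\<sigma>^2)),
  so exp(\<theta>) (l_\<sigma>(\<theta>) - l_\<sigma>(0)) is the integral against l(u) \<phi>(u) du of an entire
  function of \<theta>. Its Taylor coefficients a_n are obtained by integrating the power series
  termwise, which \<bar>l(u)\<bar> \<le> \<bar>u\<bar> \<le> exp \<bar>u\<bar> and the Gaussian moment generating function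
  justify; the same domination gives
  \<Sum> \<bar>a_n\<bar> r^n \<le> M(r) = 4 exp(\<sigma>^2/2) exp(r^2/\<sigma>^2 + 2r) for every r > 0.
  The polynomial is the Taylor polynomial of degree k - 1, and the Cauchy estimates
  \<bar>a_n\<bar> \<le> M(r)/r^n and \<bar>\<Sum>_{n \<ge> k} a_n \<theta>^n\<bar> \<le> \<theta>*^k M(r)/r^k,
  taken at the radius r = \<theta>* + \<sigma> sqrt(n/2), which nearly minimises M(r)/r^n,
  and combined with n! \<le> e n (n/e)^n, give the stated rates.
\<close>

section \<open>Cauchy estimates from a majorant\<close>

lemma abs_coeff_le_majorant:
  fixes a :: "nat \<Rightarrow> real"
  assumes "r > 0" and maj: "\<And>N. (\<Sum>n<N. \<bar>a n\<bar> * r ^ n) \<le> M"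
  shows "\<bar>a n\<bar> \<le> M / r ^ n"
proof -
  have "\<bar>a n\<bar> * r ^ n \<le> (\<Sum>m<Suc n. \<bar>a m\<bar> * r ^ m)"
    using \<open>r > 0\<close> by (simp add: sum_nonneg)
  also have "\<dots> \<le> M" by (rule maj)
  finally show ?thesis
    using \<open>r > 0\<close> by (simp add: le_divide_eq)
qed

lemma powser_tail_le_majorant:
  fixes a :: "nat \<Rightarrow> real"
  assumes "0 \<le> \<theta>" "\<theta> \<le> t" "t \<le> r" "r > 0"
    and maj: "\<And>N. (\<Sum>n<N. \<bar>a n\<bar> * r ^ n) \<le> M"
  shows "\<bar>\<Sum>n. a (n + k) * \<theta> ^ (n + k)\<bar> \<le> t ^ k * (M / r ^ k)"
proof -
  define T where "T n = \<bar>a (n + k) * \<theta> ^ (n + k)\<bar>" for n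
  have T_le: "T n \<le> (t / r) ^ k * (\<bar>a (n + k)\<bar> * r ^ (n + k))" for n
  proof -
    have "\<theta> ^ (n + k) \<le> r ^ n * t ^ k"
      unfolding power_add using assms by (intro mult_mono power_mono) auto
    also have "\<dots> = (t / r) ^ k * r ^ (n + k)"
      using \<open>r > 0\<close> by (simp add: power_add power_divide)
    finally show ?thesis
      unfolding T_def using \<open>0 \<le> \<theta>\<close>
      by (simp add: abs_mult mult_left_mono mult.left_commute[of "(t / r) ^ k"])
  qed
  have shifted: "(\<Sum>n<N. \<bar>a (n + k)\<bar> * r ^ (n + k)) \<le> M" for N
  proof -
    have "(\<Sum>n<N. \<bar>a (n + k)\<bar> * r ^ (n + k)) = (\<Sum>m\<in>{k..<N + k}. \<bar>a m\<bar> * r ^ m)"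
      by (rule sum.reindex_bij_witness[of _ "\<lambda>m. m - k" "\<lambda>n. n + k"]) auto
    also have "\<dots> \<le> (\<Sum>m<N + k. \<bar>a m\<bar> * r ^ m)"
      using \<open>r > 0\<close> by (intro sum_mono2) auto
    also have "\<dots> \<le> M" by (rule maj)
    finally show ?thesis .
  qed
  have partial: "(\<Sum>n<N. T n) \<le> (t / r) ^ k * M" for N
  proof -
    have "(\<Sum>n<N. T n) \<le> (t / r) ^ k * (\<Sum>n<N. \<bar>a (n + k)\<bar> * r ^ (n + k))"
      unfolding sum_distrib_left by (intro sum_mono T_le)
    also have "\<dots> \<le> (t / r) ^ k * M"
      using assms shifted by (intro mult_left_mono) auto
    finally show ?thesis .
  qed
  have "summable T"
    by (rule summableI_nonneg_bounded[OF _ partial]) (simp add: T_def)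
  then have "\<bar>\<Sum>n. a (n + k) * \<theta> ^ (n + k)\<bar> \<le> (\<Sum>n. T n)"
    unfolding T_def by (rule summable_rabs)
  also have "\<dots> \<le> (t / r) ^ k * M"
    by (rule suminf_le_const[OF \<open>summable T\<close> partial])
  finally show ?thesis
    by (simp add: power_divide)
qed

section \<open>Termwise integration of a dominated power series\<close>

context
  fixes M :: "'a measure" and p :: "nat \<Rightarrow> 'a \<Rightarrow> real" and B :: "'a \<Rightarrow> real" and r :: real
  assumes p_measurable [measurable]: "\<And>n. p n \<in> borel_measurable M"
    and p_majorant: "\<And>u N. (\<Sum>n<N. \<bar>p n u\<bar> * r ^ n) \<le> B u"
    and B_integrable: "integrable M B"
    and r_pos: "r > 0"
begin

lemma integrable_powser_coeff: "integrable M (p n)"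
proof (rule Bochner_Integration.integrable_bound)
  show "integrable M (\<lambda>u. B u / r ^ n)"
    using B_integrable by simp
  have "norm (p n u) \<le> norm (B u / r ^ n)" for u
    using abs_coeff_le_majorant[OF r_pos p_majorant] abs_ge_self
    by (metis real_norm_def order_trans)
  then show "AE u in M. norm (p n u) \<le> norm (B u / r ^ n)"
    by simp
qed simp

lemma sum_integral_abs_powser_le: "(\<Sum>n<N. (\<integral>u. \<bar>p n u\<bar> * r ^ n \<partial>M)) \<le> integral\<^sup>L M B"
proof -
  have "(\<Sum>n<N. (\<integral>u. \<bar>p n u\<bar> * r ^ n \<partial>M)) = (\<integral>u. (\<Sum>n<N. \<bar>p n u\<bar> * r ^ n) \<partial>M)"
    using integrable_powser_coeff by (simp add: integral_sum)
  also have "\<dots> \<le> integral\<^sup>L M B"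
    using integrable_powser_coeff B_integrable p_majorant by (intro integral_mono) auto
  finally show ?thesis .
qed

lemma integral_powser_coeff_majorant: "(\<Sum>n<N. \<bar>\<integral>u. p n u \<partial>M\<bar> * r ^ n) \<le> integral\<^sup>L M B"
proof -
  have "(\<Sum>n<N. \<bar>\<integral>u. p n u \<partial>M\<bar> * r ^ n) \<le> (\<Sum>n<N. (\<integral>u. \<bar>p n u\<bar> * r ^ n \<partial>M))"
    using r_pos by (intro sum_mono) (simp add: mult_right_mono)
  also have "\<dots> \<le> integral\<^sup>L M B"
    by (rule sum_integral_abs_powser_le)
  finally show ?thesis .
qed

lemma sums_integral_powser:
  assumes "\<bar>\<theta>\<bar> \<le> r"
  shows "(\<lambda>n. (\<integral>u. p n u \<partial>M) * \<theta> ^ n) sums (\<integral>u. (\<Sum>n. p n u * \<theta> ^ n) \<partial>M)"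
proof -
  have term_le: "norm (p n u * \<theta> ^ n) \<le> \<bar>p n u\<bar> * r ^ n" for n u
    using assms by (simp add: abs_mult power_abs mult_left_mono power_mono)
  have "(\<lambda>n. \<integral>u. p n u * \<theta> ^ n \<partial>M) sums (\<integral>u. (\<Sum>n. p n u * \<theta> ^ n) \<partial>M)"
  proof (rule sums_integral)
    show "integrable M (\<lambda>u. p n u * \<theta> ^ n)" for n
      using integrable_powser_coeff by simp
    show "AE u in M. summable (\<lambda>n. norm (p n u * \<theta> ^ n))"
    proof (rule AE_I2, rule summable_comparison_test)
      fix u
      show "summable (\<lambda>n. \<bar>p n u\<bar> * r ^ n)"
        using r_pos p_majorant by (intro summableI_nonneg_bounded) auto
    qed (use term_le in auto)
    show "summable (\<lambda>n. \<integral>u. norm (p n u * \<theta> ^ n) \<partial>M)"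
    proof (rule summableI_nonneg_bounded)
      fix N
      have "(\<Sum>n<N. \<integral>u. norm (p n u * \<theta> ^ n) \<partial>M) \<le> (\<Sum>n<N. (\<integral>u. \<bar>p n u\<bar> * r ^ n \<partial>M))"
        using integrable_powser_coeff term_le by (intro sum_mono integral_mono) auto
      also have "\<dots> \<le> integral\<^sup>L M B"
        by (rule sum_integral_abs_powser_le)
      finally show "(\<Sum>n<N. \<integral>u. norm (p n u * \<theta> ^ n) \<partial>M) \<le> integral\<^sup>L M B" .
    qed simp
  qed
  then show ?thesis
    by simp
qed

end

section \<open>Power series of the Gaussian kernel\<close>

definition gauss_coeff :: "real \<Rightarrow> nat \<Rightarrow> real" where
  "gauss_coeff c i = (if even i then c ^ (i div 2) / fact (i div 2) else 0)"

lemma gauss_coeff_sums: "(\<lambda>i. gauss_coeff c i * x ^ i) sums exp (c * x\<^sup>2)"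
proof -
  have "(\<lambda>n. gauss_coeff c (2 * n) * x ^ (2 * n)) = (\<lambda>n. (c * x\<^sup>2) ^ n /\<^sub>R fact n)"
    by (simp add: gauss_coeff_def fun_eq_iff power_mult power_mult_distrib divide_inverse_commute)
  then have "(\<lambda>n. gauss_coeff c (2 * n) * x ^ (2 * n)) sums exp (c * x\<^sup>2)"
    using exp_converges by metis
  then show ?thesis
    by (subst sums_mono_reindex[of "\<lambda>n. 2 * n", symmetric])
       (auto simp: strict_mono_def gauss_coeff_def elim!: evenE)
qed

lemma abs_gauss_coeff: "\<bar>gauss_coeff c i\<bar> = gauss_coeff \<bar>c\<bar> i"
  by (simp add: gauss_coeff_def power_abs)

lemma gauss_coeff_nonneg: "c \<ge> 0 \<Longrightarrow> gauss_coeff c i \<ge> 0"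
  by (simp add: gauss_coeff_def)

definition exp_gauss_coeff :: "real \<Rightarrow> real \<Rightarrow> nat \<Rightarrow> real" where
  "exp_gauss_coeff c y n = (\<Sum>i\<le>n. gauss_coeff c i * y ^ (n - i) / fact (n - i))"

lemma exp_gauss_coeff_sums:
  "(\<lambda>n. exp_gauss_coeff c y n * x ^ n) sums exp (c * x\<^sup>2 + x * y)"
proof -
  have gauss: "(\<lambda>i. gauss_coeff c i * x ^ i) sums exp (c * x\<^sup>2)"
    by (rule gauss_coeff_sums)
  have expo: "(\<lambda>j. (x * y) ^ j / fact j) sums exp (x * y)"
    using exp_converges[of "x * y"] by (simp add: divide_inverse_commute)
  have "summable (\<lambda>i. norm (gauss_coeff c i * x ^ i))"
    using gauss_coeff_sums[of "\<bar>c\<bar>" "\<bar>x\<bar>"]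
    by (simp add: sums_iff abs_mult abs_gauss_coeff power_abs)
  moreover have "summable (\<lambda>j. norm ((x * y) ^ j / fact j))"
    using exp_converges[of "\<bar>x * y\<bar>"] by (simp add: sums_iff abs_mult power_abs divide_inverse_commute)
  ultimately have "(\<lambda>n. \<Sum>i\<le>n. gauss_coeff c i * x ^ i * ((x * y) ^ (n - i) / fact (n - i)))
      sums (exp (c * x\<^sup>2) * exp (x * y))"
    using Cauchy_product_sums[of "\<lambda>i. gauss_coeff c i * x ^ i" "\<lambda>j. (x * y) ^ j / fact j"]
    unfolding sums_unique[OF gauss, symmetric] sums_unique[OF expo, symmetric] by blast
  moreover have "(\<Sum>i\<le>n. gauss_coeff c i * x ^ i * ((x * y) ^ (n - i) / fact (n - i)))
      = exp_gauss_coeff c y n * x ^ n" for n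
    unfolding exp_gauss_coeff_def sum_distrib_right
  proof (intro sum.cong refl)
    fix i assume "i \<in> {..n}"
    then have "x ^ i * x ^ (n - i) = x ^ n" by (simp flip: power_add)
    then show "gauss_coeff c i * x ^ i * ((x * y) ^ (n - i) / fact (n - i))
        = gauss_coeff c i * y ^ (n - i) / fact (n - i) * x ^ n"
      by (simp add: power_mult_distrib field_simps)
  qed
  ultimately show ?thesis
    by (simp add: exp_add)
qed

lemma abs_exp_gauss_coeff_le: "\<bar>exp_gauss_coeff c y n\<bar> \<le> exp_gauss_coeff \<bar>c\<bar> \<bar>y\<bar> n"
  unfolding exp_gauss_coeff_def
  by (rule order_trans[OF sum_abs]) (simp add: abs_mult abs_gauss_coeff power_abs)

lemma exp_gauss_coeff_nonneg: "c \<ge> 0 \<Longrightarrow> y \<ge> 0 \<Longrightarrow> exp_gauss_coeff c y n \<ge> 0"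
  unfolding exp_gauss_coeff_def by (intro sum_nonneg) (simp add: gauss_coeff_nonneg)

definition kernel_coeff :: "real \<Rightarrow> nat \<Rightarrow> real \<Rightarrow> real" where
  "kernel_coeff s n u = exp_gauss_coeff (- 1 / (2 * s\<^sup>2)) (1 + u / s\<^sup>2) n - 1 / fact n"

lemma kernel_coeff_sums:
  "(\<lambda>n. kernel_coeff s n u * \<theta> ^ n) sums (exp (- \<theta>\<^sup>2 / (2 * s\<^sup>2) + \<theta> * (1 + u / s\<^sup>2)) - exp \<theta>)"
proof -
  have "(\<lambda>n. exp_gauss_coeff (- 1 / (2 * s\<^sup>2)) (1 + u / s\<^sup>2) n * \<theta> ^ n - \<theta> ^ n /\<^sub>R fact n)
      sums (exp (- 1 / (2 * s\<^sup>2) * \<theta>\<^sup>2 + \<theta> * (1 + u / s\<^sup>2)) - exp \<theta>)"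
    by (intro sums_diff exp_gauss_coeff_sums exp_converges)
  moreover have "exp_gauss_coeff (- 1 / (2 * s\<^sup>2)) (1 + u / s\<^sup>2) n * \<theta> ^ n - \<theta> ^ n /\<^sub>R fact n
      = kernel_coeff s n u * \<theta> ^ n" for n
    by (simp add: kernel_coeff_def left_diff_distrib field_simps)
  ultimately show ?thesis
    by simp
qed

lemma kernel_coeff_majorant:
  assumes "r \<ge> 0"
  shows "(\<Sum>n<N. \<bar>kernel_coeff s n u\<bar> * r ^ n) \<le> exp (r + r\<^sup>2 / (2 * s\<^sup>2) + r / s\<^sup>2 * \<bar>u\<bar>) + exp r"
proof -
  define c y where "c = 1 / (2 * s\<^sup>2)" and "y = \<bar>1 + u / s\<^sup>2\<bar>"
  define b where "b n = exp_gauss_coeff c y n * r ^ n + r ^ n / fact n" for n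
  have b_nonneg: "b n \<ge> 0" for n
    unfolding b_def c_def y_def using assms by (simp add: exp_gauss_coeff_nonneg)
  have b_sums: "b sums (exp (c * r\<^sup>2 + r * y) + exp r)"
    unfolding b_def using exp_converges[of r]
    by (intro sums_add exp_gauss_coeff_sums) (simp add: field_simps)
  have "\<bar>kernel_coeff s n u\<bar> * r ^ n \<le> b n" for n
  proof -
    have "\<bar>kernel_coeff s n u\<bar>
        \<le> \<bar>exp_gauss_coeff (- 1 / (2 * s\<^sup>2)) (1 + u / s\<^sup>2) n\<bar> + \<bar>1 / fact n\<bar>"
      unfolding kernel_coeff_def by (rule abs_triangle_ineq4)
    also have "\<dots> \<le> exp_gauss_coeff c y n + 1 / fact n"
      using abs_exp_gauss_coeff_le[of "- 1 / (2 * s\<^sup>2)" "1 + u / s\<^sup>2" n]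
      by (simp add: c_def y_def)
    finally have "\<bar>kernel_coeff s n u\<bar> \<le> exp_gauss_coeff c y n + 1 / fact n" .
    then have "\<bar>kernel_coeff s n u\<bar> * r ^ n \<le> (exp_gauss_coeff c y n + 1 / fact n) * r ^ n"
      using assms by (intro mult_right_mono) auto
    then show ?thesis
      unfolding b_def by (simp add: distrib_right)
  qed
  then have "(\<Sum>n<N. \<bar>kernel_coeff s n u\<bar> * r ^ n) \<le> (\<Sum>n<N. b n)"
    by (rule sum_mono)
  also have "\<dots> \<le> exp (c * r\<^sup>2 + r * y) + exp r"
    using b_sums b_nonneg by (metis sums_iff sum_le_suminf finite_lessThan)
  also have "\<dots> \<le> exp (r + r\<^sup>2 / (2 * s\<^sup>2) + r / s\<^sup>2 * \<bar>u\<bar>) + exp r"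
  proof -
    have "y \<le> 1 + \<bar>u\<bar> / s\<^sup>2"
      unfolding y_def using abs_triangle_ineq[of 1 "u / s\<^sup>2"] by (simp add: abs_divide)
    then have "r * y \<le> r + r / s\<^sup>2 * \<bar>u\<bar>"
      using mult_left_mono[OF _ assms] by (fastforce simp: distrib_left)
    then show ?thesis
      unfolding c_def by simp
  qed
  finally show ?thesis .
qed

lemma kernel_coeff_measurable [measurable]: "kernel_coeff s n \<in> borel_measurable borel"
  unfolding kernel_coeff_def exp_gauss_coeff_def by measurable

section \<open>Gaussian integrals\<close>

lemma gauss_dens_nonneg: "gauss_dens s u \<ge> 0"
  by (simp add: gauss_dens_def)

lemma gauss_dens_measurable [measurable]: "gauss_dens s \<in> borel_measurable borel"
  unfolding gauss_dens_def by measurable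

lemma has_bochner_integral_gauss_dens_exp:
  assumes "s > 0"
  shows "has_bochner_integral lborel (\<lambda>u. gauss_dens s u * exp (t * u)) (exp (t\<^sup>2 * s\<^sup>2 / 2))"
proof -
  have tilt: "gauss_dens s u * exp (t * u) = exp (t\<^sup>2 * s\<^sup>2 / 2) * normal_density (t * s\<^sup>2) s u" for u
  proof -
    have "- u\<^sup>2 / (2 * s\<^sup>2) + t * u = - (u - t * s\<^sup>2)\<^sup>2 / (2 * s\<^sup>2) + t\<^sup>2 * s\<^sup>2 / 2"
      using assms by (simp add: field_simps power2_eq_square)
    then show ?thesis
      unfolding gauss_dens_def normal_density_def by (simp add: mult_ac flip: exp_add)
  qed
  have "has_bochner_integral lborel (\<lambda>u. exp (t\<^sup>2 * s\<^sup>2 / 2) * normal_density (t * s\<^sup>2) s u) (exp (t\<^sup>2 * s\<^sup>2 / 2) * 1)"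
    using assms by (intro has_bochner_integral_mult_right) (simp add: has_bochner_integral_iff)
  then show ?thesis
    by (simp add: tilt)
qed

lemma gauss_dens_exp_abs:
  assumes "s > 0"
  shows "integrable lborel (\<lambda>u. gauss_dens s u * exp (t * \<bar>u\<bar>))"
    and "(\<integral>u. gauss_dens s u * exp (t * \<bar>u\<bar>) \<partial>lborel) \<le> 2 * exp (t\<^sup>2 * s\<^sup>2 / 2)"
proof -
  define g where "g u = gauss_dens s u * exp (t * u) + gauss_dens s u * exp ((- t) * u)" for u
  have g: "has_bochner_integral lborel g (2 * exp (t\<^sup>2 * s\<^sup>2 / 2))"
    unfolding g_def
    using has_bochner_integral_add[OF has_bochner_integral_gauss_dens_exp[OF assms, of t]
        has_bochner_integral_gauss_dens_exp[OF assms, of "- t"]] by simp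
  have le: "gauss_dens s u * exp (t * \<bar>u\<bar>) \<le> g u" for u
  proof -
    have "exp (t * \<bar>u\<bar>) \<le> exp (t * u) + exp ((- t) * u)"
      by (cases "u \<ge> 0") (auto simp: add_increasing add_increasing2)
    then show ?thesis
      unfolding g_def using gauss_dens_nonneg by (simp add: mult_left_mono flip: distrib_left)
  qed
  have g_int: "integrable lborel g"
    using g by (rule integrable.intros)
  show int: "integrable lborel (\<lambda>u. gauss_dens s u * exp (t * \<bar>u\<bar>))"
  proof (rule Bochner_Integration.integrable_bound[OF g_int])
    show "(\<lambda>u. gauss_dens s u * exp (t * \<bar>u\<bar>)) \<in> borel_measurable lborel"
      by measurable
    show "AE u in lborel. norm (gauss_dens s u * exp (t * \<bar>u\<bar>)) \<le> norm (g u)"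
    proof (rule AE_I2)
      fix u
      have "0 \<le> gauss_dens s u * exp (t * \<bar>u\<bar>)"
        using gauss_dens_nonneg by simp
      then show "norm (gauss_dens s u * exp (t * \<bar>u\<bar>)) \<le> norm (g u)"
        using le[of u] by simp
    qed
  qed
  have "(\<integral>u. gauss_dens s u * exp (t * \<bar>u\<bar>) \<partial>lborel) \<le> integral\<^sup>L lborel g"
    by (rule integral_mono[OF int g_int le])
  then show "(\<integral>u. gauss_dens s u * exp (t * \<bar>u\<bar>) \<partial>lborel) \<le> 2 * exp (t\<^sup>2 * s\<^sup>2 / 2)"
    using has_bochner_integral_integral_eq[OF g] by simp
qed

definition coeff_majorant :: "real \<Rightarrow> real \<Rightarrow> real" where
  "coeff_majorant s r = 4 * exp (s\<^sup>2 / 2) * exp (r\<^sup>2 / s\<^sup>2 + 2 * r)"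

definition gauss_dominant :: "real \<Rightarrow> real \<Rightarrow> real \<Rightarrow> real" where
  "gauss_dominant s r u =
     gauss_dens s u * exp \<bar>u\<bar> * (exp (r + r\<^sup>2 / (2 * s\<^sup>2) + r / s\<^sup>2 * \<bar>u\<bar>) + exp r)"

lemma gauss_dominant_integral:
  assumes "s > 0" "r \<ge> 0"
  shows "integrable lborel (gauss_dominant s r)"
    and "integral\<^sup>L lborel (gauss_dominant s r) \<le> coeff_majorant s r"
proof -
  define A t where "A = exp (r + r\<^sup>2 / (2 * s\<^sup>2))" and "t = r / s\<^sup>2 + 1"
  have split: "gauss_dominant s r = (\<lambda>u. A * (gauss_dens s u * exp (t * \<bar>u\<bar>))
                 + exp r * (gauss_dens s u * exp (1 * \<bar>u\<bar>)))"
    unfolding gauss_dominant_def A_def t_def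
    by (simp add: fun_eq_iff algebra_simps flip: exp_add)
  note int = gauss_dens_exp_abs(1)[OF \<open>s > 0\<close>]
  note bound = gauss_dens_exp_abs(2)[OF \<open>s > 0\<close>]
  show "integrable lborel (gauss_dominant s r)"
    unfolding split using int[of t] int[of 1] by simp
  have "integral\<^sup>L lborel (gauss_dominant s r)
      = A * (\<integral>u. gauss_dens s u * exp (t * \<bar>u\<bar>) \<partial>lborel)
        + exp r * (\<integral>u. gauss_dens s u * exp (1 * \<bar>u\<bar>) \<partial>lborel)"
    unfolding split using int[of t] int[of 1] by simp
  also have "\<dots> \<le> A * (2 * exp (t\<^sup>2 * s\<^sup>2 / 2)) + exp r * (2 * exp (1\<^sup>2 * s\<^sup>2 / 2))"
    by (intro add_mono mult_left_mono bound) (simp_all add: A_def)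
  also have "A * (2 * exp (t\<^sup>2 * s\<^sup>2 / 2)) = 2 * exp (s\<^sup>2 / 2) * exp (r\<^sup>2 / s\<^sup>2 + 2 * r)"
  proof -
    have "r + r\<^sup>2 / (2 * s\<^sup>2) + t\<^sup>2 * s\<^sup>2 / 2 = s\<^sup>2 / 2 + (r\<^sup>2 / s\<^sup>2 + 2 * r)"
      using \<open>s > 0\<close> by (simp add: t_def field_simps power2_eq_square)
    then show ?thesis
      unfolding A_def by (simp flip: exp_add)
  qed
  also have "exp r * (2 * exp (1\<^sup>2 * s\<^sup>2 / 2)) \<le> 2 * exp (s\<^sup>2 / 2) * exp (r\<^sup>2 / s\<^sup>2 + 2 * r)"
    using assms by simp
  finally show "integral\<^sup>L lborel (gauss_dominant s r) \<le> coeff_majorant s r"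
    unfolding coeff_majorant_def by simp
qed

section \<open>Taylor coefficients of the smoothed function\<close>

lemma smooth_eq_integral_shift: "smooth l s \<theta> = (\<integral>u. l u * gauss_dens s (\<theta> - u) \<partial>lborel)"
  unfolding smooth_def
  using lborel_integral_real_affine[of "-1" "\<lambda>y. l (\<theta> - y) * gauss_dens s y" \<theta>] by simp

lemma exp_mult_gauss_dens_shift:
  assumes "s > 0"
  shows "exp \<theta> * gauss_dens s (\<theta> - u)
    = gauss_dens s u * exp (- \<theta>\<^sup>2 / (2 * s\<^sup>2) + \<theta> * (1 + u / s\<^sup>2))"
proof -
  have "\<theta> + - (\<theta> - u)\<^sup>2 / (2 * s\<^sup>2) = - u\<^sup>2 / (2 * s\<^sup>2) + (- \<theta>\<^sup>2 / (2 * s\<^sup>2) + \<theta> * (1 + u / s\<^sup>2))"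
    using assms by (simp add: field_simps power2_eq_square)
  then show ?thesis
    unfolding gauss_dens_def by (simp add: mult_ac flip: exp_add)
qed

definition smooth_coeff :: "(real \<Rightarrow> real) \<Rightarrow> real \<Rightarrow> nat \<Rightarrow> real" where
  "smooth_coeff l s n = (\<integral>u. l u * gauss_dens s u * kernel_coeff s n u \<partial>lborel)"

context
  fixes l :: "real \<Rightarrow> real" and s :: real
  assumes s_pos: "s > 0"
    and l_measurable [measurable]: "l \<in> borel_measurable borel"
    and l_bound: "\<And>u. \<bar>l u\<bar> \<le> \<bar>u\<bar>"
begin

lemma weighted_le_gauss_dominant:
  assumes "0 \<le> g" "g \<le> exp (r + r\<^sup>2 / (2 * s\<^sup>2) + r / s\<^sup>2 * \<bar>u\<bar>) + exp r"
  shows "\<bar>l u * gauss_dens s u\<bar> * g \<le> gauss_dominant s r u"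
proof -
  have "\<bar>l u\<bar> \<le> exp \<bar>u\<bar>"
    using l_bound[of u] exp_ge_add_one_self[of "\<bar>u\<bar>"] by linarith
  then have "\<bar>l u * gauss_dens s u\<bar> \<le> gauss_dens s u * exp \<bar>u\<bar>"
    using gauss_dens_nonneg by (simp add: abs_mult mult.commute mult_left_mono)
  then show ?thesis
    unfolding gauss_dominant_def using assms gauss_dens_nonneg
    by (intro mult_mono) auto
qed

lemma integrable_of_le_gauss_dominant:
  assumes [measurable]: "g \<in> borel_measurable borel" and "r \<ge> 0"
    and "\<And>u. 0 \<le> g u" "\<And>u. g u \<le> exp (r + r\<^sup>2 / (2 * s\<^sup>2) + r / s\<^sup>2 * \<bar>u\<bar>) + exp r"
  shows "integrable lborel (\<lambda>u. l u * gauss_dens s u * g u)"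
proof (rule Bochner_Integration.integrable_bound[OF gauss_dominant_integral(1)[OF s_pos \<open>r \<ge> 0\<close>]])
  show "(\<lambda>u. l u * gauss_dens s u * g u) \<in> borel_measurable lborel"
    by measurable
  have "\<bar>l u * gauss_dens s u * g u\<bar> \<le> gauss_dominant s r u" for u
    using weighted_le_gauss_dominant[of "g u" r u] assms by (simp add: abs_mult)
  then have "norm (l u * gauss_dens s u * g u) \<le> norm (gauss_dominant s r u)" for u
    by (metis real_norm_def abs_ge_self order_trans)
  then show "AE u in lborel. norm (l u * gauss_dens s u * g u) \<le> norm (gauss_dominant s r u)"
    by simp
qed

lemma exp_mult_smooth_diff:
  "exp \<theta> * (smooth l s \<theta> - smooth l s 0)
    = (\<integral>u. l u * gauss_dens s u * (exp (- \<theta>\<^sup>2 / (2 * s\<^sup>2) + \<theta> * (1 + u / s\<^sup>2)) - exp \<theta>) \<partial>lborel)"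
proof -
  let ?E = "\<lambda>u. exp (- \<theta>\<^sup>2 / (2 * s\<^sup>2) + \<theta> * (1 + u / s\<^sup>2))"
  have E_le: "?E u \<le> exp (\<bar>\<theta>\<bar> + \<bar>\<theta>\<bar>\<^sup>2 / (2 * s\<^sup>2) + \<bar>\<theta>\<bar> / s\<^sup>2 * \<bar>u\<bar>) + exp \<bar>\<theta>\<bar>" for u
  proof -
    have "\<theta> * (1 + u / s\<^sup>2) \<le> \<bar>\<theta>\<bar> * \<bar>1 + u / s\<^sup>2\<bar>"
      by (metis abs_ge_self abs_mult)
    also have "\<dots> \<le> \<bar>\<theta>\<bar> * (1 + \<bar>u\<bar> / s\<^sup>2)"
      using abs_triangle_ineq[of 1 "u / s\<^sup>2"] by (intro mult_left_mono) (auto simp: abs_divide)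
    finally have "\<theta> * (1 + u / s\<^sup>2) \<le> \<bar>\<theta>\<bar> + \<bar>\<theta>\<bar> / s\<^sup>2 * \<bar>u\<bar>"
      by (simp add: distrib_left)
    moreover have "- \<theta>\<^sup>2 / (2 * s\<^sup>2) \<le> \<bar>\<theta>\<bar>\<^sup>2 / (2 * s\<^sup>2)"
      by simp
    ultimately have "- \<theta>\<^sup>2 / (2 * s\<^sup>2) + \<theta> * (1 + u / s\<^sup>2)
        \<le> \<bar>\<theta>\<bar> + \<bar>\<theta>\<bar>\<^sup>2 / (2 * s\<^sup>2) + \<bar>\<theta>\<bar> / s\<^sup>2 * \<bar>u\<bar>"
      by linarith
    then show ?thesis
      using exp_ge_zero[of "\<bar>\<theta>\<bar>"] by (simp add: add_increasing2)
  qed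
  have "(\<lambda>u. ?E u) \<in> borel_measurable borel"
    by measurable
  then have int_E: "integrable lborel (\<lambda>u. l u * gauss_dens s u * ?E u)"
    by (rule integrable_of_le_gauss_dominant[OF _ abs_ge_zero _ E_le]) simp
  have int_1: "integrable lborel (\<lambda>u. l u * gauss_dens s u * 1)"
    by (rule integrable_of_le_gauss_dominant[of _ 0]) simp_all
  have "exp \<theta> * smooth l s \<theta> = (\<integral>u. l u * (exp \<theta> * gauss_dens s (\<theta> - u)) \<partial>lborel)"
    unfolding smooth_eq_integral_shift
    by (simp add: mult.left_commute[of "exp \<theta>"] flip: integral_mult_right_zero)
  also have "\<dots> = (\<integral>u. l u * gauss_dens s u * ?E u \<partial>lborel)"
    by (simp add: exp_mult_gauss_dens_shift[OF s_pos] mult.assoc)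
  finally have shifted: "exp \<theta> * smooth l s \<theta> = (\<integral>u. l u * gauss_dens s u * ?E u \<partial>lborel)" .
  have "gauss_dens s (0 - u) = gauss_dens s u" for u
    by (simp add: gauss_dens_def)
  then have at_0: "exp \<theta> * smooth l s 0 = (\<integral>u. l u * gauss_dens s u * 1 * exp \<theta> \<partial>lborel)"
    unfolding smooth_eq_integral_shift by simp
  have "exp \<theta> * (smooth l s \<theta> - smooth l s 0)
      = (\<integral>u. l u * gauss_dens s u * ?E u - l u * gauss_dens s u * 1 * exp \<theta> \<partial>lborel)"
    unfolding right_diff_distrib shifted at_0
    by (rule Bochner_Integration.integral_diff[symmetric]) (use int_E int_1 in simp_all)
  then show ?thesis
    by (simp add: right_diff_distrib)
qed

lemma weighted_kernel_majorant:
  assumes "r \<ge> 0"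
  shows "(\<Sum>n<N. \<bar>l u * gauss_dens s u * kernel_coeff s n u\<bar> * r ^ n) \<le> gauss_dominant s r u"
proof -
  have "(\<Sum>n<N. \<bar>l u * gauss_dens s u * kernel_coeff s n u\<bar> * r ^ n)
      = \<bar>l u * gauss_dens s u\<bar> * (\<Sum>n<N. \<bar>kernel_coeff s n u\<bar> * r ^ n)"
    by (simp add: abs_mult sum_distrib_left mult.assoc)
  also have "\<dots> \<le> gauss_dominant s r u"
    using assms kernel_coeff_majorant[OF assms]
    by (intro weighted_le_gauss_dominant sum_nonneg) auto
  finally show ?thesis .
qed

lemma smooth_coeff_majorant:
  assumes "r > 0"
  shows "(\<Sum>n<N. \<bar>smooth_coeff l s n\<bar> * r ^ n) \<le> coeff_majorant s r"
proof -
  have "(\<Sum>n<N. \<bar>smooth_coeff l s n\<bar> * r ^ n) \<le> integral\<^sup>L lborel (gauss_dominant s r)"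
    unfolding smooth_coeff_def
  proof (rule integral_powser_coeff_majorant)
    show "(\<Sum>n<N. \<bar>l u * gauss_dens s u * kernel_coeff s n u\<bar> * r ^ n) \<le> gauss_dominant s r u"
      for u N
      using assms by (intro weighted_kernel_majorant) simp
    show "integrable lborel (gauss_dominant s r)"
      using assms by (intro gauss_dominant_integral(1) s_pos) simp
    show "(\<lambda>u. l u * gauss_dens s u * kernel_coeff s n u) \<in> borel_measurable lborel" for n
      by measurable
  qed (rule assms)
  also have "\<dots> \<le> coeff_majorant s r"
    using assms by (intro gauss_dominant_integral s_pos) simp
  finally show ?thesis .
qed

lemma smooth_coeff_sums:
  "(\<lambda>n. smooth_coeff l s n * \<theta> ^ n) sums (exp \<theta> * (smooth l s \<theta> - smooth l s 0))"
proof -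
  have "(\<lambda>n. smooth_coeff l s n * \<theta> ^ n)
      sums (\<integral>u. (\<Sum>n. l u * gauss_dens s u * kernel_coeff s n u * \<theta> ^ n) \<partial>lborel)"
    unfolding smooth_coeff_def
  proof (rule sums_integral_powser[where B = "gauss_dominant s (\<bar>\<theta>\<bar> + 1)"])
    show "(\<Sum>n<N. \<bar>l u * gauss_dens s u * kernel_coeff s n u\<bar> * (\<bar>\<theta>\<bar> + 1) ^ n)
        \<le> gauss_dominant s (\<bar>\<theta>\<bar> + 1) u" for u N
      by (rule weighted_kernel_majorant) simp
    show "integrable lborel (gauss_dominant s (\<bar>\<theta>\<bar> + 1))"
      by (rule gauss_dominant_integral(1)[OF s_pos]) simp
    show "(\<lambda>u. l u * gauss_dens s u * kernel_coeff s n u) \<in> borel_measurable lborel" for n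
      by measurable
  qed simp_all
  moreover have "(\<Sum>n. l u * gauss_dens s u * kernel_coeff s n u * \<theta> ^ n)
      = l u * gauss_dens s u * (exp (- \<theta>\<^sup>2 / (2 * s\<^sup>2) + \<theta> * (1 + u / s\<^sup>2)) - exp \<theta>)" for u
    using sums_mult[OF kernel_coeff_sums, of "l u * gauss_dens s u" s u \<theta>]
    by (simp add: sums_iff mult.assoc)
  ultimately show ?thesis
    by (simp add: exp_mult_smooth_diff)
qed

lemma smooth_taylor_remainder:
  "smooth l s \<theta> - smooth l s 0 - exp (- \<theta>) * (\<Sum>n<k. smooth_coeff l s n * \<theta> ^ n)
    = exp (- \<theta>) * (\<Sum>n. smooth_coeff l s (n + k) * \<theta> ^ (n + k))"
proof -
  let ?a = "\<lambda>n. smooth_coeff l s n * \<theta> ^ n"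
  have sums: "?a sums (exp \<theta> * (smooth l s \<theta> - smooth l s 0))"
    by (rule smooth_coeff_sums)
  then have "smooth l s \<theta> - smooth l s 0 = exp (- \<theta>) * suminf ?a"
    by (simp add: sums_iff exp_minus field_simps)
  also have "suminf ?a = (\<Sum>n. ?a (n + k)) + (\<Sum>n<k. ?a n)"
    using sums by (intro suminf_split_initial_segment) (simp add: sums_iff)
  finally show ?thesis
    by (simp add: algebra_simps)
qed

lemma abs_smooth_coeff_le: "r > 0 \<Longrightarrow> \<bar>smooth_coeff l s n\<bar> \<le> coeff_majorant s r / r ^ n"
  by (intro abs_coeff_le_majorant smooth_coeff_majorant)

lemma abs_smooth_taylor_remainder_le:
  assumes "0 \<le> \<theta>" "\<theta> \<le> t" "t \<le> r" "r > 0"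
  shows "\<bar>smooth l s \<theta> - smooth l s 0 - exp (- \<theta>) * (\<Sum>n<k. smooth_coeff l s n * \<theta> ^ n)\<bar>
    \<le> t ^ k * (coeff_majorant s r / r ^ k)"
proof -
  have "\<bar>smooth l s \<theta> - smooth l s 0 - exp (- \<theta>) * (\<Sum>n<k. smooth_coeff l s n * \<theta> ^ n)\<bar>
      = exp (- \<theta>) * \<bar>\<Sum>n. smooth_coeff l s (n + k) * \<theta> ^ (n + k)\<bar>"
    by (simp add: smooth_taylor_remainder abs_mult)
  also have "\<dots> \<le> \<bar>\<Sum>n. smooth_coeff l s (n + k) * \<theta> ^ (n + k)\<bar>"
    using assms by (intro mult_left_le_one_le) auto
  also have "\<dots> \<le> t ^ k * (coeff_majorant s r / r ^ k)"
    using assms smooth_coeff_majorant[OF \<open>r > 0\<close>] by (intro powser_tail_le_majorant)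
  finally show ?thesis .
qed

end

section \<open>Growth of the Cauchy bound\<close>

lemma exp_one_le_power:
  assumes "n \<ge> 1"
  shows "exp 1 \<le> ((real n + 1) / real n) ^ (n + 1)"
proof -
  have "ln (real n / (real n + 1)) \<le> real n / (real n + 1) - 1"
    using assms by (intro ln_le_minus_one) simp
  also have "\<dots> = - 1 / (real n + 1)"
    by (simp add: field_simps)
  finally have "1 / (real n + 1) \<le> ln ((real n + 1) / real n)"
    using assms by (simp add: ln_div)
  then have "1 \<le> real (n + 1) * ln ((real n + 1) / real n)"
    by (simp add: field_simps)
  then have "exp 1 \<le> exp (real (n + 1) * ln ((real n + 1) / real n))"
    by simp
  also have "\<dots> = exp (ln ((real n + 1) / real n)) ^ (n + 1)"
    by (rule exp_of_nat_mult)
  also have "\<dots> = ((real n + 1) / real n) ^ (n + 1)"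
    using assms by simp
  finally show ?thesis .
qed

lemma fact_le_exp_power: "n \<ge> 1 \<Longrightarrow> fact n \<le> exp 1 * real n * (real n / exp 1) ^ n"
proof (induction n rule: nat_induct_at_least)
  case base
  then show ?case by simp
next
  case (Suc n)
  have "real n * (real n / exp 1) ^ n * exp 1 = exp 1 * (real n / exp 1) ^ (n + 1) * exp 1"
    by (simp add: field_simps)
  also have "\<dots> \<le> ((real n + 1) / real n) ^ (n + 1) * (real n / exp 1) ^ (n + 1) * exp 1"
    using exp_one_le_power[OF Suc.hyps] by (intro mult_right_mono) auto
  also have "\<dots> = ((real n + 1) / exp 1) ^ (n + 1) * exp 1"
    using Suc.hyps by (simp flip: power_mult_distrib)
  finally have step: "real n * (real n / exp 1) ^ n \<le> ((real n + 1) / exp 1) ^ (n + 1)"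
    by (simp add: le_divide_eq)
  have "fact (Suc n) = (real n + 1) * fact n"
    by simp
  also have "\<dots> \<le> (real n + 1) * (exp 1 * (real n * (real n / exp 1) ^ n))"
    using Suc.IH by (intro mult_left_mono) (simp_all add: mult.assoc)
  also have "\<dots> \<le> (real n + 1) * (exp 1 * ((real n + 1) / exp 1) ^ (n + 1))"
    using step by (intro mult_left_mono) simp_all
  finally show ?case
    by (simp add: mult_ac add.commute)
qed

lemma pow00_half_eq_sqrt_power:
  assumes "a \<ge> 0"
  shows "pow00 a (real n / 2) = sqrt a ^ n"
proof (cases "a = 0")
  case True
  then show ?thesis
    by (simp add: pow00_def power_0_left)
next
  case False
  have "sqrt a ^ n = (a powr (1 / 2)) ^ n"
    using assms by (simp add: powr_half_sqrt)
  also have "\<dots> = a powr (real n / 2)"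
    using False by (simp add: powr_power)
  finally show ?thesis
    using False by (simp add: pow00_def)
qed

definition coeff_rate :: "real \<Rightarrow> nat \<Rightarrow> real" where
  "coeff_rate s n =
     sqrt (real n + 1) * 2 ^ n * (1 + pow00 (real n / (exp 1 * s\<^sup>2)) (real n / 2)) / fact n"

lemma coeff_majorant_at_radius:
  assumes "s > 0"
  shows "coeff_majorant s (t + s * sqrt (real n / 2))
    = coeff_majorant s t * exp (sqrt 2 * (t / s + s) * sqrt (real n)) * exp (1 / 2) ^ n"
proof -
  have "sqrt 2 * sqrt (real n) = 2 * sqrt (real n / 2)"
    by (simp add: real_sqrt_divide field_simps)
  moreover have "sqrt (real n / 2) ^ 2 = real n / 2"
    by simp
  ultimately have "(t + s * sqrt (real n / 2))\<^sup>2 / s\<^sup>2 + 2 * (t + s * sqrt (real n / 2))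
      = (t\<^sup>2 / s\<^sup>2 + 2 * t) + sqrt 2 * (t / s + s) * sqrt (real n) + real n * (1 / 2)"
    using assms by (simp add: field_simps power2_eq_square)
  then have "coeff_majorant s (t + s * sqrt (real n / 2)) = 4 * exp (s\<^sup>2 / 2)
      * exp ((t\<^sup>2 / s\<^sup>2 + 2 * t) + sqrt 2 * (t / s + s) * sqrt (real n) + real n * (1 / 2))"
    by (simp only: coeff_majorant_def)
  then show ?thesis
    by (simp add: coeff_majorant_def exp_add mult_ac flip: exp_of_nat_mult)
qed

lemma sqrt_exp_growth_bounded:
  assumes "\<beta> > 0"
  obtains B where "\<And>n. real n * exp (\<beta> * sqrt (real n)) / sqrt 2 ^ n \<le> B"
proof -
  have "(\<lambda>n. real n * exp (\<beta> * sqrt (real n)) / sqrt 2 powr real n) \<longlonglongrightarrow> 0"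
    using assms by real_asymp
  then have "Bseq (\<lambda>n. real n * exp (\<beta> * sqrt (real n)) / sqrt 2 ^ n)"
    by (simp add: powr_realpow convergent_imp_Bseq convergentI)
  then obtain K where K: "\<And>n. norm (real n * exp (\<beta> * sqrt (real n)) / sqrt 2 ^ n) \<le> K"
    unfolding Bseq_def by blast
  show ?thesis
  proof (rule that)
    show "real n * exp (\<beta> * sqrt (real n)) / sqrt 2 ^ n \<le> K" for n
      using abs_le_D1[OF K[of n, unfolded real_norm_def]] .
  qed
qed

lemma coeff_majorant_div_power_le:
  assumes "t \<ge> 0" "s > 0" "n \<ge> 1"
  defines "r \<equiv> t + s * sqrt (real n / 2)"
  shows "coeff_majorant s r / r ^ n
    \<le> exp 1 * coeff_majorant s t
       * (real n * exp (sqrt 2 * (t / s + s) * sqrt (real n)) / sqrt 2 ^ n)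
       * (2 ^ n * sqrt (real n / (exp 1 * s\<^sup>2)) ^ n / fact n)"
proof -
  define g where "g = real n * exp (sqrt 2 * (t / s + s) * sqrt (real n)) / sqrt 2 ^ n"
  define q where "q = sqrt (real n / (exp 1 * s\<^sup>2))"
  have radius: "sqrt 2 * exp (1 / 2) * (real n / exp 1) = 2 * q * (s * sqrt (real n / 2))"
  proof -
    have "exp (1 / 2) ^ 2 = exp (1::real)"
      by (simp flip: exp_of_nat_mult)
    then have "(sqrt 2 * exp (1 / 2) * (real n / exp 1))\<^sup>2 = (2 * q * (s * sqrt (real n / 2)))\<^sup>2"
      using \<open>s > 0\<close> unfolding q_def
      by (simp add: power_mult_distrib power_divide field_simps power2_eq_square)
    then show ?thesis
      using \<open>s > 0\<close> unfolding q_def by simp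
  qed
  have "coeff_majorant s r * fact n \<le> coeff_majorant s r * (exp 1 * real n * (real n / exp 1) ^ n)"
    using fact_le_exp_power[OF \<open>n \<ge> 1\<close>] by (intro mult_left_mono) (simp_all add: coeff_majorant_def)
  also have "\<dots> = exp 1 * coeff_majorant s t * (g * sqrt 2 ^ n) * (exp (1 / 2) * (real n / exp 1)) ^ n"
    unfolding r_def coeff_majorant_at_radius[OF \<open>s > 0\<close>] g_def
    by (simp add: power_mult_distrib power_divide mult_ac)
  also have "\<dots> = exp 1 * coeff_majorant s t * g * (sqrt 2 * exp (1 / 2) * (real n / exp 1)) ^ n"
    by (simp only: power_mult_distrib mult_ac)
  also have "\<dots> = exp 1 * coeff_majorant s t * g * (2 * q * (s * sqrt (real n / 2))) ^ n"
    by (simp only: radius)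
  also have "\<dots> \<le> exp 1 * coeff_majorant s t * g * (2 * q * r) ^ n"
    unfolding r_def using assms
    by (intro mult_left_mono power_mono) (simp_all add: q_def g_def coeff_majorant_def)
  finally have "coeff_majorant s r * fact n \<le> exp 1 * coeff_majorant s t * g * (2 * q * r) ^ n" .
  moreover have "r > 0"
    unfolding r_def using assms by (intro add_nonneg_pos mult_pos_pos) auto
  ultimately have "coeff_majorant s r / r ^ n \<le> exp 1 * coeff_majorant s t * g * (2 ^ n * q ^ n / fact n)"
    by (simp add: field_simps power_mult_distrib)
  then show ?thesis
    by (simp only: g_def q_def)
qed

lemma two_power_le_coeff_rate: "2 ^ n * sqrt (real n / (exp 1 * s\<^sup>2)) ^ n / fact n \<le> coeff_rate s n"
proof -
  have "2 ^ n * sqrt (real n / (exp 1 * s\<^sup>2)) ^ n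
      \<le> sqrt (real n + 1) * 2 ^ n * (1 + sqrt (real n / (exp 1 * s\<^sup>2)) ^ n)"
    by (rule mult_mono) simp_all
  then show ?thesis
    unfolding coeff_rate_def by (simp add: pow00_half_eq_sqrt_power divide_right_mono)
qed

lemma coeff_majorant_le_rate:
  assumes "t > 0" "s > 0"
  obtains C where "C > 0"
    and "\<And>n. coeff_majorant s (t + s * sqrt (real n / 2)) / (t + s * sqrt (real n / 2)) ^ n
               \<le> C * coeff_rate s n"
proof -
  have "sqrt 2 * (t / s + s) > 0"
    using assms by (intro mult_pos_pos add_pos_pos divide_pos_pos) simp_all
  then obtain B where B: "\<And>n. real n * exp (sqrt 2 * (t / s + s) * sqrt (real n)) / sqrt 2 ^ n \<le> B"
    using sqrt_exp_growth_bounded by blast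
  define C where "C = max (exp 1 * coeff_majorant s t * B) (coeff_majorant s t)"
  have C_ge: "exp 1 * coeff_majorant s t * B \<le> C" "coeff_majorant s t \<le> C"
    by (simp_all add: C_def)
  have "coeff_majorant s t > 0"
    by (simp add: coeff_majorant_def)
  then have "C > 0"
    using C_ge by linarith
  moreover have "coeff_majorant s (t + s * sqrt (real n / 2)) / (t + s * sqrt (real n / 2)) ^ n
      \<le> C * coeff_rate s n" for n
  proof (cases "n = 0")
    case True
    then show ?thesis
      using C_ge \<open>C > 0\<close> by (simp add: coeff_rate_def pow00_def)
  next
    case False
    let ?g = "real n * exp (sqrt 2 * (t / s + s) * sqrt (real n)) / sqrt 2 ^ n"
    have "coeff_majorant s (t + s * sqrt (real n / 2)) / (t + s * sqrt (real n / 2)) ^ n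
        \<le> exp 1 * coeff_majorant s t * ?g * (2 ^ n * sqrt (real n / (exp 1 * s\<^sup>2)) ^ n / fact n)"
      using assms False by (intro coeff_majorant_div_power_le) auto
    also have "\<dots> \<le> C * coeff_rate s n"
    proof (rule mult_mono[OF _ two_power_le_coeff_rate])
      have "exp 1 * coeff_majorant s t * ?g \<le> exp 1 * coeff_majorant s t * B"
        using B[of n] by (intro mult_left_mono) (simp_all add: coeff_majorant_def)
      then show "exp 1 * coeff_majorant s t * ?g \<le> C"
        using C_ge(1) by linarith
    qed (use \<open>C > 0\<close> in simp_all)
    finally show ?thesis .
  qed
  ultimately show ?thesis
    using that by blast
qed

lemma borel_measurable_abs_le_of_lipschitz:
  fixes l :: "real \<Rightarrow> real"
  assumes "1-lipschitz_on UNIV l" "l 0 = 0"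
  shows "l \<in> borel_measurable borel" "\<bar>l u\<bar> \<le> \<bar>u\<bar>"
proof -
  show "l \<in> borel_measurable borel"
    using lipschitz_on_continuous_on[OF assms(1)] by (rule borel_measurable_continuous_onI)
  show "\<bar>l u\<bar> \<le> \<bar>u\<bar>"
    using lipschitz_onD[OF assms(1), of u 0] assms(2) unfolding dist_real_def by simp
qed

theorem lemma1:
  fixes \<theta>s \<sigma> :: real
  assumes "\<theta>s > 0" and "\<sigma> > 0"
  shows "\<exists>C>0. \<forall>(l::real \<Rightarrow> real) (k::nat).
           1-lipschitz_on UNIV l \<longrightarrow> l 0 = 0 \<longrightarrow> k \<ge> 1 \<longrightarrow>
           (\<exists>c :: nat \<Rightarrow> real.
              (\<forall>x\<le>k-1. \<bar>c x\<bar> \<le> C * sqrt (real x + 1) * 2 ^ x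
                   * (1 + pow00 (real x / (exp 1 * \<sigma>\<^sup>2)) (real x / 2)) / fact x) \<and>
              (\<forall>\<theta>\<in>{0..\<theta>s}. \<bar>smooth l \<sigma> \<theta> - smooth l \<sigma> 0
                   - exp (- \<theta>) * (\<Sum>x\<le>k-1. c x * \<theta> ^ x)\<bar>
                 \<le> C * sqrt (real k + 1) * (2 * \<theta>s) ^ k
                   * (1 + pow00 (real k / (exp 1 * \<sigma>\<^sup>2)) (real k / 2)) / fact k))"
proof -
  define \<rho> where "\<rho> n = \<theta>s + \<sigma> * sqrt (real n / 2)" for n
  obtain C where "C > 0"
    and rate: "\<And>n. coeff_majorant \<sigma> (\<rho> n) / \<rho> n ^ n \<le> C * coeff_rate \<sigma> n"
    using coeff_majorant_le_rate[OF assms] unfolding \<rho>_def by blast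
  have \<rho>: "\<theta>s \<le> \<rho> n" "\<rho> n > 0" for n
    using assms by (simp_all add: \<rho>_def add_pos_nonneg)
  have coeff: "\<bar>smooth_coeff l \<sigma> x\<bar> \<le> C * sqrt (real x + 1) * 2 ^ x
                 * (1 + pow00 (real x / (exp 1 * \<sigma>\<^sup>2)) (real x / 2)) / fact x"
    if "1-lipschitz_on UNIV l" "l 0 = 0" for l x
    using order_trans[OF abs_smooth_coeff_le[OF \<open>\<sigma> > 0\<close>
        borel_measurable_abs_le_of_lipschitz[OF that] \<rho>(2)] rate] by (simp add: coeff_rate_def mult.assoc)
  have remainder: "\<bar>smooth l \<sigma> \<theta> - smooth l \<sigma> 0
        - exp (- \<theta>) * (\<Sum>x\<le>k-1. smooth_coeff l \<sigma> x * \<theta> ^ x)\<bar>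
      \<le> C * sqrt (real k + 1) * (2 * \<theta>s) ^ k
        * (1 + pow00 (real k / (exp 1 * \<sigma>\<^sup>2)) (real k / 2)) / fact k"
    if "1-lipschitz_on UNIV l" "l 0 = 0" "k \<ge> 1" "\<theta> \<in> {0..\<theta>s}" for l k \<theta>
  proof -
    have "{..k - 1} = {..<k}"
      using \<open>k \<ge> 1\<close> by auto
    have "\<bar>smooth l \<sigma> \<theta> - smooth l \<sigma> 0 - exp (- \<theta>) * (\<Sum>x\<le>k-1. smooth_coeff l \<sigma> x * \<theta> ^ x)\<bar>
        \<le> \<theta>s ^ k * (coeff_majorant \<sigma> (\<rho> k) / \<rho> k ^ k)"
      unfolding \<open>{..k - 1} = {..<k}\<close>
      using that(4) borel_measurable_abs_le_of_lipschitz[OF that(1,2)]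
      by (intro abs_smooth_taylor_remainder_le[OF \<open>\<sigma> > 0\<close>] \<rho>) auto
    also have "\<dots> \<le> \<theta>s ^ k * (C * coeff_rate \<sigma> k)"
      using rate assms by (intro mult_left_mono) auto
    finally show ?thesis
      by (simp add: coeff_rate_def power_mult_distrib mult_ac)
  qed
  show ?thesis
    using \<open>C > 0\<close> coeff remainder by blast
qed

end
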